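(* Let $\mathcal D[t]\subset\mathcal H\subset\mathcal D^\times[t^\times]$ be a rigged Hilbert space with $\mathcal D[t]$ reflexive, and take $(X,\mu)=(\mathbb N,\gamma)$ with $\gamma$ the counting measure. Let $\omega:n\in\mathbb N\mapsto\omega_n\in\mathcal D^\times$ be a bounded Bessel distribution map (resp. a distribution frame). Then for each $n$ the conjugate linear functional $\omega_n$ is bounded with respect to the norm of $\mathcal H$, hence $\omega_n\in\mathcal H$, and $\{\omega_n\}_{n\in\mathbb N}$ is a Bessel sequence (resp. a frame) of $\mathcal H$, i.e. $\sum_n|\langle f,\omega_n\rangle|^2\le B\|f\|^2$ (resp. $A\|f\|^2\le\sum_n|\langle f,\omega_n\rangle|^2\le B\|f\|^2$) for all $f\in\mathcal H$, with the same bounds.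
   Context: A rigged Hilbert space $\mathcal D[t]\subset\mathcal H\subset\mathcal D^\times[t^\times]$: $\mathcal H$ is a Hilbert space with inner product $\langle\cdot,\cdot\rangle$ and norm $\|\cdot\|$; $\mathcal D$ is a dense subspace of $\mathcal H$ with a locally convex topology $t$ finer than the norm topology; $\mathcal D^\times$ is the space of continuous conjugate linear functionals on $\mathcal D[t]$ with the strong dual topology; $\mathcal H$ is identified with a subspace of $\mathcal D^\times$, and the duality pairing between $\mathcal D^\times$ and $\mathcal D$, also written $\langle\cdot,\cdot\rangle$, extends the inner product; $\langle f,F\rangle:=\overline{\langle F,f\rangle}$ for $f\in\mathcal D$, $F\in\mathcal D^\times$. A map $\omega:X\to\mathcal D^\times$ is weakly measurable if $x\mapsto\langle f,\omega_x\rangle$ is $\mu$-measurable for each $f\in\mathcal D$. It is a bounded Bessel distribution map if there is $B>0$ with $\int_X|\langle f,\omega_x\rangle|^2d\mu\le B\|f\|^2$ for all $f\in\mathcal D$; it is a distribution frame if additionally there is $A>0$ with $A\|f\|^2\le\int_X|\langle f,\omega_x\rangle|^2d\mu$ for all $f\in\mathcal D$. *)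

theory Defs
  imports "HOL-Analysis.Analysis"
begin

class complex_vector = real_vector +
  fixes scaleC :: "complex \<Rightarrow> 'a \<Rightarrow> 'a" (infixr \<open>*\<^sub>C\<close> 75)
  assumes scaleC_add_right: "a *\<^sub>C (x + y) = a *\<^sub>C x + a *\<^sub>C y"
    and scaleC_add_left: "(a + b) *\<^sub>C x = a *\<^sub>C x + b *\<^sub>C x"
    and scaleC_scaleC: "a *\<^sub>C (b *\<^sub>C x) = (a * b) *\<^sub>C x"
    and scaleC_one: "1 *\<^sub>C x = x"
    and scaleR_scaleC: "scaleR r x = complex_of_real r *\<^sub>C x"

text \<open>Complex inner product space; the inner product is linear in the first
  and conjugate linear in the second argument.\<close>
class complex_inner = complex_vector + real_normed_vector +
  fixes cinner :: "'a \<Rightarrow> 'a \<Rightarrow> complex"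
  assumes cinner_commute: "cinner x y = cnj (cinner y x)"
    and cinner_add_left: "cinner (x + y) z = cinner x z + cinner y z"
    and cinner_scaleC_left: "cinner (a *\<^sub>C x) y = a * cinner x y"
    and cinner_self_real: "Im (cinner x x) = 0"
    and cinner_self_nonneg: "0 \<le> Re (cinner x x)"
    and cinner_self_eq_zero: "cinner x x = 0 \<longleftrightarrow> x = 0"
    and norm_eq_sqrt_cinner: "norm x = sqrt (Re (cinner x x))"

text \<open>The locally convex topology t on D is given by a family P of seminorms on D.\<close>

definition csubspace :: "'h::complex_vector set \<Rightarrow> bool" where
  "csubspace D \<longleftrightarrow> 0 \<in> D \<and> (\<forall>x\<in>D. \<forall>y\<in>D. x + y \<in> D) \<and> (\<forall>c. \<forall>x\<in>D. c *\<^sub>C x \<in> D)"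

definition cseminorm_on :: "'h::complex_vector set \<Rightarrow> ('h \<Rightarrow> real) \<Rightarrow> bool" where
  "cseminorm_on D p \<longleftrightarrow> (\<forall>x\<in>D. 0 \<le> p x) \<and> (\<forall>x\<in>D. \<forall>y\<in>D. p (x + y) \<le> p x + p y)
     \<and> (\<forall>c. \<forall>x\<in>D. p (c *\<^sub>C x) = cmod c * p x)"

text \<open>A seminorm-like function q is continuous on D[t] iff it is dominated by a
  multiple of a finite sum of seminorms from P.\<close>
definition t_dominated :: "('h \<Rightarrow> real) set \<Rightarrow> 'h set \<Rightarrow> ('h \<Rightarrow> real) \<Rightarrow> bool" where
  "t_dominated P D q \<longleftrightarrow> (\<exists>F C. finite F \<and> F \<subseteq> P \<and> (\<forall>x\<in>D. q x \<le> C * (\<Sum>p\<in>F. p x)))"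

definition conj_linear_on :: "'h::complex_vector set \<Rightarrow> ('h \<Rightarrow> complex) \<Rightarrow> bool" where
  "conj_linear_on D F \<longleftrightarrow> (\<forall>x\<in>D. \<forall>y\<in>D. F (x + y) = F x + F y)
     \<and> (\<forall>c. \<forall>x\<in>D. F (c *\<^sub>C x) = cnj c * F x)"

text \<open>D^x: continuous conjugate linear functionals on D[t] (extended by 0 outside D).
  For F \<in> D^x and f \<in> D the pairing is \<langle>F,f\<rangle> = F f and \<langle>f,F\<rangle> = cnj (F f).\<close>
definition dual_space :: "('h \<Rightarrow> real) set \<Rightarrow> 'h::complex_vector set \<Rightarrow> ('h \<Rightarrow> complex) set" where
  "dual_space P D = {F. conj_linear_on D F \<and> t_dominated P D (\<lambda>x. cmod (F x)) \<and> (\<forall>x. x \<notin> D \<longrightarrow> F x = 0)}"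

definition rigged_hilbert_space ::
  "'h::{complex_inner, complete_space} set \<Rightarrow> ('h \<Rightarrow> real) set \<Rightarrow> bool" where
  "rigged_hilbert_space D P \<longleftrightarrow> csubspace D \<and> closure D = UNIV
     \<and> (\<forall>p\<in>P. cseminorm_on D p) \<and> t_dominated P D norm"

definition t_bounded :: "('h \<Rightarrow> real) set \<Rightarrow> 'h set \<Rightarrow> 'h set \<Rightarrow> bool" where
  "t_bounded P D B \<longleftrightarrow> B \<subseteq> D \<and> (\<forall>p\<in>P. bdd_above (p ` B))"

text \<open>Strongly bounded subsets of D^x (bounded for the strong dual topology,
  i.e. uniformly bounded on every bounded subset of D[t]).\<close>
definition strongly_bounded :: "('h::complex_vector \<Rightarrow> real) set \<Rightarrow> 'h set \<Rightarrow> ('h \<Rightarrow> complex) set \<Rightarrow> bool" where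
  "strongly_bounded P D M \<longleftrightarrow> M \<subseteq> dual_space P D \<and>
     (\<forall>B. t_bounded P D B \<longrightarrow> bdd_above {cmod (F f) | F f. F \<in> M \<and> f \<in> B})"

text \<open>Linear functionals on D^x continuous for the strong dual topology, whose
  seminorms are F \<mapsto> sup over f \<in> B of |F f|, B bounded in D[t].\<close>
definition strong_dual_continuous ::
  "('h \<Rightarrow> real) set \<Rightarrow> 'h::complex_vector set \<Rightarrow> (('h \<Rightarrow> complex) \<Rightarrow> complex) \<Rightarrow> bool" where
  "strong_dual_continuous P D \<Phi> \<longleftrightarrow>
     (\<forall>F\<in>dual_space P D. \<forall>G\<in>dual_space P D. \<Phi> (\<lambda>x. F x + G x) = \<Phi> F + \<Phi> G)
   \<and> (\<forall>c. \<forall>F\<in>dual_space P D. \<Phi> (\<lambda>x. c * F x) = c * \<Phi> F)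
   \<and> (\<exists>Bs C. finite Bs \<and> (\<forall>B\<in>Bs. B \<noteq> {} \<and> t_bounded P D B) \<and>
        (\<forall>F\<in>dual_space P D. cmod (\<Phi> F) \<le> C * (\<Sum>B\<in>Bs. SUP f\<in>B. cmod (F f))))"

text \<open>D[t] is reflexive: the canonical map f \<mapsto> (F \<mapsto> F f) from D onto the strong
  bidual is surjective and a topological isomorphism, i.e. the topology t coincides
  with the topology of uniform convergence on strongly bounded subsets of D^x.\<close>
definition reflexive_lcs :: "('h \<Rightarrow> real) set \<Rightarrow> 'h::complex_vector set \<Rightarrow> bool" where
  "reflexive_lcs P D \<longleftrightarrow>
     (\<forall>\<Phi>. strong_dual_continuous P D \<Phi> \<longrightarrow> (\<exists>f\<in>D. \<forall>F\<in>dual_space P D. \<Phi> F = F f))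
   \<and> (\<forall>M. strongly_bounded P D M \<and> M \<noteq> {} \<longrightarrow> t_dominated P D (\<lambda>f. SUP F\<in>M. cmod (F f)))
   \<and> (\<forall>p\<in>P. \<exists>Ms C. finite Ms \<and> (\<forall>M\<in>Ms. M \<noteq> {} \<and> strongly_bounded P D M) \<and>
        (\<forall>f\<in>D. p f \<le> C * (\<Sum>M\<in>Ms. SUP F\<in>M. cmod (F f))))"

text \<open>The pairing <f, omega_x> is cnj (omega x f).\<close>
definition bessel_distribution_map ::
  "('h \<Rightarrow> real) set \<Rightarrow> 'h::complex_inner set \<Rightarrow> 'x measure \<Rightarrow> ('x \<Rightarrow> 'h \<Rightarrow> complex) \<Rightarrow> real \<Rightarrow> bool" where
  "bessel_distribution_map P D M \<omega> B \<longleftrightarrow>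
     (\<forall>x\<in>space M. \<omega> x \<in> dual_space P D)
   \<and> (\<forall>f\<in>D. (\<lambda>x. cnj (\<omega> x f)) \<in> borel_measurable M)
   \<and> B > 0
   \<and> (\<forall>f\<in>D. (\<integral>\<^sup>+x. ennreal ((cmod (cnj (\<omega> x f)))\<^sup>2) \<partial>M) \<le> ennreal (B * (norm f)\<^sup>2))"

definition distribution_frame ::
  "('h \<Rightarrow> real) set \<Rightarrow> 'h::complex_inner set \<Rightarrow> 'x measure \<Rightarrow> ('x \<Rightarrow> 'h \<Rightarrow> complex) \<Rightarrow> real \<Rightarrow> real \<Rightarrow> bool" where
  "distribution_frame P D M \<omega> A B \<longleftrightarrow> bessel_distribution_map P D M \<omega> B \<and> A > 0
   \<and> (\<forall>f\<in>D. ennreal (A * (norm f)\<^sup>2) \<le> (\<integral>\<^sup>+x. ennreal ((cmod (cnj (\<omega> x f)))\<^sup>2) \<partial>M))"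

definition bessel_sequence :: "(nat \<Rightarrow> 'h::complex_inner) \<Rightarrow> real \<Rightarrow> bool" where
  "bessel_sequence h B \<longleftrightarrow> (\<forall>f. summable (\<lambda>n. (cmod (cinner f (h n)))\<^sup>2)
      \<and> (\<Sum>n. (cmod (cinner f (h n)))\<^sup>2) \<le> B * (norm f)\<^sup>2)"

definition frame_sequence :: "(nat \<Rightarrow> 'h::complex_inner) \<Rightarrow> real \<Rightarrow> real \<Rightarrow> bool" where
  "frame_sequence h A B \<longleftrightarrow> bessel_sequence h B
      \<and> (\<forall>f. A * (norm f)\<^sup>2 \<le> (\<Sum>n. (cmod (cinner f (h n)))\<^sup>2))"

end

theory Submission
  imports Defs
begin

text \<open>For the counting measure, the Bessel bound at the single index \<open>n\<close> already gives
  \<open>|\<langle>f, \<omega>\<^sub>n\<rangle>| \<le> \<surd>B \<parallel>f\<parallel>\<close> on \<open>D\<close>. Hence \<open>\<omega>\<^sub>n\<close> extends by continuity to a bounded conjugate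
  linear functional on \<open>H\<close>, which by the Riesz representation theorem is \<open>\<langle>h\<^sub>n, \<cdot>\<rangle>\<close>. The Bessel
  and lower frame inequalities pass from the dense subspace \<open>D\<close> to all of \<open>H\<close> by continuity:
  the partial sums of \<open>\<Sum>\<^sub>n |\<langle>f, h\<^sub>n\<rangle>|\<^sup>2\<close> are continuous in \<open>f\<close>, and once the Bessel bound holds,
  the square root of the full sum is a seminorm dominated by \<open>\<surd>B \<parallel>f\<parallel>\<close>, hence Lipschitz.

  For the Riesz theorem, the parallelogram law makes every sequence in the unit ball along
  which \<open>Re \<psi>\<close> tends to its supremum a Cauchy sequence; its limit \<open>u\<close> attains the norm
  of \<open>\<psi>\<close>, which forces \<open>u\<close> to be orthogonal to the kernel of \<open>\<psi>\<close>.\<close>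

lemma scaleC_zero_left [simp]: "(0::complex) *\<^sub>C (x::'a::complex_vector) = 0"
  by (metis add_cancel_right_right add.right_neutral scaleC_add_left)

lemma scaleC_minus_left: "(- a) *\<^sub>C (x::'a::complex_vector) = - (a *\<^sub>C x)"
  by (metis add.right_inverse add_eq_0_iff2 scaleC_add_left scaleC_zero_left)

lemma scaleC_minus1_left: "(- 1) *\<^sub>C (x::'a::complex_vector) = - x"
  by (simp add: scaleC_minus_left scaleC_one)

lemma csubspace_diff:
  assumes "csubspace D" "x \<in> D" "y \<in> D"
  shows "x - y \<in> D"
  using assms unfolding csubspace_def by (metis diff_conv_add_uminus scaleC_minus1_left)

lemma cinner_zero_left [simp]: "cinner 0 (y::'a::complex_inner) = 0"
  by (metis add_cancel_right_right cinner_add_left add_0)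

lemma cinner_zero_right [simp]: "cinner (x::'a::complex_inner) 0 = 0"
  by (metis cinner_commute cinner_zero_left complex_cnj_zero)

lemma cinner_add_right: "cinner (x::'a::complex_inner) (y + z) = cinner x y + cinner x z"
  by (metis cinner_add_left cinner_commute complex_cnj_add)

lemma cinner_scaleC_right: "cinner (x::'a::complex_inner) (a *\<^sub>C y) = cnj a * cinner x y"
  by (metis cinner_commute cinner_scaleC_left complex_cnj_mult)

lemma cinner_minus_right: "cinner (x::'a::complex_inner) (- y) = - cinner x y"
  by (metis cinner_scaleC_right complex_cnj_minus complex_cnj_one mult_minus1 scaleC_minus1_left)

lemma cinner_diff_right: "cinner (x::'a::complex_inner) (y - z) = cinner x y - cinner x z"
  by (metis diff_conv_add_uminus cinner_add_right cinner_minus_right)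

lemma cmod_cinner_commute: "cmod (cinner (x::'a::complex_inner) y) = cmod (cinner y x)"
  by (metis cinner_commute complex_mod_cnj)

lemma cinner_self: "cinner (x::'a::complex_inner) x = complex_of_real ((norm x)\<^sup>2)"
  by (simp add: norm_eq_sqrt_cinner cinner_self_nonneg complex_eq_iff cinner_self_real)

lemma norm_scaleC: "norm (a *\<^sub>C (x::'a::complex_inner)) = cmod a * norm x"
proof -
  have "complex_of_real ((norm (a *\<^sub>C x))\<^sup>2) = (a * cnj a) * cinner x x"
    unfolding cinner_self [symmetric] by (simp add: cinner_scaleC_left cinner_scaleC_right mult.assoc)
  also have "\<dots> = complex_of_real ((cmod a * norm x)\<^sup>2)"
    by (simp add: complex_norm_square [symmetric] cinner_self power_mult_distrib)
  finally have "(norm (a *\<^sub>C x))\<^sup>2 = (cmod a * norm x)\<^sup>2"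
    using of_real_eq_iff by blast
  then show ?thesis
    by (simp add: power2_eq_iff_nonneg)
qed

lemma norm_add_square:
  "(norm ((x::'a::complex_inner) + y))\<^sup>2 = (norm x)\<^sup>2 + (norm y)\<^sup>2 + 2 * Re (cinner x y)"
proof -
  have "Re (cinner y x) = Re (cinner x y)"
    by (metis cinner_commute complex_cnj_cnj cnj.sel(1))
  then show ?thesis
    using cinner_self [of "x + y"] cinner_self [of x] cinner_self [of y]
    by (simp add: cinner_add_left cinner_add_right complex_eq_iff)
qed

lemma parallelogram_law:
  "(norm ((x::'a::complex_inner) + y))\<^sup>2 + (norm (x - y))\<^sup>2 = 2 * (norm x)\<^sup>2 + 2 * (norm y)\<^sup>2"
  using norm_add_square [of x y] norm_add_square [of x "- y"] by (simp add: cinner_minus_right)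

lemma cinner_Cauchy_Schwarz: "cmod (cinner (x::'a::complex_inner) y) \<le> norm x * norm y"
proof (cases "y = 0")
  case False
  define c where "c = cmod (cinner x y)"
  define n where "n = (norm y)\<^sup>2"
  define t where "t = cinner x y / complex_of_real n"
  have n: "0 < n"
    using False by (simp add: n_def)
  have "(norm (x - t *\<^sub>C y))\<^sup>2 = (norm x)\<^sup>2 + (cmod t * norm y)\<^sup>2 - 2 * Re (cnj t * cinner x y)"
    using norm_add_square [of x "- (t *\<^sub>C y)"] by (simp add: norm_scaleC cinner_minus_right cinner_scaleC_right)
  also have "cnj t * cinner x y = complex_of_real (c\<^sup>2 / n)"
    using n by (simp add: t_def c_def mult.commute flip: complex_norm_square)
  also have "cmod t = c / n"
    using n by (simp add: t_def c_def norm_divide)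
  also have "(c / n * norm y)\<^sup>2 = (c / n)\<^sup>2 * n"
    by (simp only: n_def power_mult_distrib)
  also have "\<dots> = c\<^sup>2 / n"
    using n by (simp add: power2_eq_square)
  finally have "(norm (x - t *\<^sub>C y))\<^sup>2 = (norm x)\<^sup>2 - c\<^sup>2 / n"
    by simp
  then have "c\<^sup>2 / n \<le> (norm x)\<^sup>2"
    by (metis diff_ge_0_iff_ge zero_le_power2)
  then have "c\<^sup>2 \<le> (norm x * norm y)\<^sup>2"
    using n by (simp add: divide_le_eq power_mult_distrib n_def mult.commute)
  then show ?thesis
    unfolding c_def by (rule power2_le_imp_le) simp
qed simp

lemma bounded_linear_scaleC_right: "bounded_linear (\<lambda>x::'a::complex_inner. c *\<^sub>C x)"
  by (rule bounded_linear_intro [of _ "cmod c"])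
     (auto simp: scaleC_add_right scaleR_scaleC scaleC_scaleC mult.commute norm_scaleC)

lemma bounded_linear_cinner_left: "bounded_linear (\<lambda>x::'a::complex_inner. cinner x h)"
proof (rule bounded_linear_intro [of _ "norm h"])
  show "cinner (r *\<^sub>R x) h = r *\<^sub>R cinner x h" for r x
    by (simp add: scaleR_scaleC cinner_scaleC_left scaleR_conv_of_real)
qed (simp_all add: cinner_add_left cinner_Cauchy_Schwarz)

lemma norm_diff_square_le_if_norm_add_ge:
  fixes x y :: "'a::complex_inner"
  assumes x: "norm x \<le> 1" and y: "norm y \<le> 1" and add: "2 - d \<le> norm (x + y)"
  shows "(norm (x - y))\<^sup>2 \<le> 4 * d"
proof -
  define a where "a = norm (x + y)"
  have a: "0 \<le> a" "a \<le> 2"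
    using x y norm_triangle_ineq [of x y] by (auto simp: a_def)
  have "(norm (x - y))\<^sup>2 = 2 * (norm x)\<^sup>2 + 2 * (norm y)\<^sup>2 - a\<^sup>2"
    using parallelogram_law [of x y] by (simp add: a_def)
  also have "\<dots> \<le> 4 - a\<^sup>2"
    using power_mono [OF x norm_ge_zero, of 2] power_mono [OF y norm_ge_zero, of 2] by simp
  also have "\<dots> = (2 - a) * (2 + a)"
    by (simp add: power2_eq_square algebra_simps)
  also have "\<dots> \<le> d * 4"
    using add a by (intro mult_mono) (auto simp: a_def)
  finally show ?thesis
    by simp
qed

lemma cmod_le_if_Re_le:
  fixes psi :: "'a::complex_inner \<Rightarrow> complex"
  assumes scale: "\<And>c x. psi (c *\<^sub>C x) = c * psi x"
    and Re_le: "\<And>w. Re (psi w) \<le> M * norm w"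
  shows "cmod (psi w) \<le> M * norm w"
proof (cases "psi w = 0")
  case True
  then show ?thesis
    using Re_le [of w] by simp
next
  case False
  define c where "c = cnj (psi w) / complex_of_real (cmod (psi w))"
  have "cnj (psi w) * psi w = complex_of_real (cmod (psi w)) * complex_of_real (cmod (psi w))"
    by (metis complex_norm_square mult.commute of_real_mult power2_eq_square)
  then have "psi (c *\<^sub>C w) = complex_of_real (cmod (psi w))"
    using False by (simp add: scale c_def)
  moreover have "norm (c *\<^sub>C w) = norm w"
    using False by (simp add: norm_scaleC c_def norm_divide)
  ultimately show ?thesis
    using Re_le [of "c *\<^sub>C w"] by simp
qed

lemma Cauchy_if_Re_maximizing:
  fixes psi :: "'a::complex_inner \<Rightarrow> complex" and xs :: "nat \<Rightarrow> 'a"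
  assumes add: "\<And>x y. psi (x + y) = psi x + psi y"
    and Re_le: "\<And>w. Re (psi w) \<le> M * norm w" and M: "0 < M"
    and norm_le: "\<And>k. norm (xs k) \<le> 1"
    and maximizing: "\<And>k. M - 1 / real (Suc k) < Re (psi (xs k))"
  shows "Cauchy xs"
proof (rule metric_CauchyI)
  fix e :: real
  assume e: "0 < e"
  have dist_le: "(dist (xs j) (xs k))\<^sup>2 \<le> 4 * ((1 / real (Suc j) + 1 / real (Suc k)) / M)" for j k
  proof -
    define d where "d = 1 / real (Suc j) + 1 / real (Suc k)"
    have "M * (2 - d / M) < M * norm (xs j + xs k)"
      using maximizing [of j] maximizing [of k] Re_le [of "xs j + xs k"] M
      by (simp add: add d_def right_diff_distrib)
    then have "2 - d / M \<le> norm (xs j + xs k)"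
      using M by simp
    then have "(norm (xs j - xs k))\<^sup>2 \<le> 4 * (d / M)"
      by (rule norm_diff_square_le_if_norm_add_ge [OF norm_le norm_le])
    then show ?thesis
      by (simp add: dist_norm d_def)
  qed
  obtain N where "8 / (M * e\<^sup>2) < real N"
    using reals_Archimedean2 by blast
  moreover have "0 < M * e\<^sup>2"
    using M e by simp
  ultimately have "8 < real (Suc N) * (M * e\<^sup>2)"
    by (simp add: divide_less_eq distrib_right)
  then have bound: "8 / (M * real (Suc N)) < e\<^sup>2"
    using M by (simp add: divide_less_eq mult_ac)
  show "\<exists>N. \<forall>m\<ge>N. \<forall>n\<ge>N. dist (xs m) (xs n) < e"
  proof (intro exI [of _ N] allI impI)
    fix m n
    assume "N \<le> m" "N \<le> n"
    then have "1 / real (Suc m) + 1 / real (Suc n) \<le> 2 / real (Suc N)"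
      using frac_le [of 1 1 "real (Suc N)" "real (Suc m)"] frac_le [of 1 1 "real (Suc N)" "real (Suc n)"]
      by simp
    then have "4 * ((1 / real (Suc m) + 1 / real (Suc n)) / M) \<le> 4 * (2 / real (Suc N) / M)"
      using M by (intro mult_left_mono divide_right_mono) simp_all
    moreover have "4 * (2 / real (Suc N) / M) = 8 / (M * real (Suc N))"
      by simp
    ultimately have "(dist (xs m) (xs n))\<^sup>2 < e\<^sup>2"
      using dist_le [of m n] bound by linarith
    then show "dist (xs m) (xs n) < e"
      using e by (simp add: power_less_imp_less_base)
  qed
qed

lemma bounded_linear_if_clinear:
  fixes psi :: "'a::complex_inner \<Rightarrow> complex"
  assumes add: "\<And>x y. psi (x + y) = psi x + psi y"
    and scale: "\<And>c x. psi (c *\<^sub>C x) = c * psi x"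
    and bounded: "\<And>x. cmod (psi x) \<le> K * norm x"
  shows "bounded_linear psi"
  by (rule bounded_linear_intro [of _ K])
     (simp_all add: add scale scaleR_scaleC scaleR_conv_of_real bounded mult.commute)

lemma Re_le_Sup_unit_ball:
  fixes psi :: "'a::complex_inner \<Rightarrow> complex"
  assumes scale: "\<And>c x. psi (c *\<^sub>C x) = c * psi x"
    and bdd: "bdd_above {Re (psi x) | x. norm x \<le> 1}"
  shows "Re (psi w) \<le> Sup {Re (psi x) | x. norm x \<le> 1} * norm w"
proof (cases "w = 0")
  case True
  then show ?thesis
    using scale [of 0 0] by simp
next
  case False
  define x where "x = complex_of_real (1 / norm w) *\<^sub>C w"
  have "norm x = 1"
    using False by (simp add: x_def norm_scaleC norm_divide)
  then have "Re (psi x) \<le> Sup {Re (psi x) | x. norm x \<le> 1}"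
    by (intro cSup_upper [OF _ bdd]) auto
  moreover have "Re (psi x) = Re (psi w) / norm w"
    by (simp add: x_def scale)
  ultimately show ?thesis
    using False by (simp add: divide_le_eq mult.commute)
qed

lemma limit_of_Re_maximizing:
  fixes psi :: "'a::{complex_inner,complete_space} \<Rightarrow> complex" and xs :: "nat \<Rightarrow> 'a"
  assumes add: "\<And>x y. psi (x + y) = psi x + psi y"
    and scale: "\<And>c x. psi (c *\<^sub>C x) = c * psi x"
    and bounded: "\<And>x. cmod (psi x) \<le> K * norm x"
    and Re_le: "\<And>w. Re (psi w) \<le> M * norm w" and M: "0 < M"
    and norm_le: "\<And>k. norm (xs k) \<le> 1"
    and maximizing: "\<And>k. M - 1 / real (Suc k) < Re (psi (xs k))"
  obtains u where "norm u = 1" "psi u = complex_of_real M"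
proof -
  have "Cauchy xs"
    by (rule Cauchy_if_Re_maximizing [OF add Re_le M norm_le maximizing])
  then obtain u where u: "xs \<longlonglongrightarrow> u"
    using Cauchy_convergent_iff convergent_def by blast
  have "norm u \<le> 1"
    using tendsto_norm [OF u] norm_le by (intro LIMSEQ_le_const2) auto
  have "(\<lambda>k. Re (psi (xs k))) \<longlonglongrightarrow> Re (psi u)"
    by (intro tendsto_Re bounded_linear.tendsto [OF bounded_linear_if_clinear [OF add scale bounded] u])
  moreover have "(\<lambda>k. Re (psi (xs k))) \<longlonglongrightarrow> M"
  proof (rule tendsto_sandwich [of "\<lambda>k. M - 1 / real (Suc k)" _ _ "\<lambda>k. M"])
    show "(\<lambda>k. M - 1 / real (Suc k)) \<longlonglongrightarrow> M"
      using tendsto_diff [OF tendsto_const [of M] LIMSEQ_inverse_real_of_nat]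
      by (simp add: inverse_eq_divide)
    have "Re (psi (xs k)) \<le> M" for k
      using Re_le [of "xs k"] mult_left_le [OF norm_le [of k], of M] M by linarith
    then show "\<forall>\<^sub>F k in sequentially. Re (psi (xs k)) \<le> M"
      by simp
  qed (use maximizing less_imp_le in \<open>auto intro: always_eventually\<close>)
  ultimately have Re_u: "Re (psi u) = M"
    by (rule LIMSEQ_unique)
  then have "norm u = 1"
    using Re_le [of u] M \<open>norm u \<le> 1\<close> by simp
  moreover have "psi u = complex_of_real M"
  proof -
    have "(Re (psi u))\<^sup>2 + (Im (psi u))\<^sup>2 \<le> M\<^sup>2"
      using cmod_le_if_Re_le [OF scale Re_le, of u] \<open>norm u = 1\<close> M
      by (metis cmod_power2 mult_1_right norm_ge_zero power_mono)
    then show ?thesis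
      using Re_u by (simp add: complex_eq_iff)
  qed
  ultimately show ?thesis
    by (rule that)
qed

lemma clinear_functional_attains_norm:
  fixes psi :: "'a::{complex_inner,complete_space} \<Rightarrow> complex"
  assumes add: "\<And>x y. psi (x + y) = psi x + psi y"
    and scale: "\<And>c x. psi (c *\<^sub>C x) = c * psi x"
    and bounded: "\<And>x. cmod (psi x) \<le> K * norm x"
    and nonzero: "psi x0 \<noteq> 0"
  obtains u M where "0 < M" "norm u = 1" "psi u = complex_of_real M"
    "\<And>w. Re (psi w) \<le> M * norm w"
proof -
  define S where "S = {Re (psi x) | x. norm x \<le> (1::real)}"
  define M where "M = Sup S"
  have "0 < K * norm x0"
    using bounded [of x0] nonzero by (meson less_le_trans zero_less_norm_iff)
  then have "0 < K"
    by (simp add: zero_less_mult_iff)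
  then have "Re (psi x) \<le> K" if "norm x \<le> 1" for x
    using complex_Re_le_cmod [of "psi x"] bounded [of x] mult_left_le [OF that, of K] by linarith
  then have bdd: "bdd_above S"
    unfolding S_def by (intro bdd_aboveI [of _ K]) auto
  have Re_le: "Re (psi w) \<le> M * norm w" for w
    unfolding M_def S_def by (rule Re_le_Sup_unit_ball [OF scale bdd [unfolded S_def]])
  have "0 < M * norm x0"
    using cmod_le_if_Re_le [OF scale Re_le, of x0] nonzero by (meson less_le_trans zero_less_norm_iff)
  then have M: "0 < M"
    by (simp add: zero_less_mult_iff)
  have "\<exists>x. norm x \<le> 1 \<and> M - 1 / real (Suc k) < Re (psi x)" for k
  proof -
    have "S \<noteq> {}"
      unfolding S_def by (auto intro!: exI [of _ 0])
    moreover have "M - 1 / real (Suc k) < Sup S"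
      by (simp add: M_def)
    ultimately show ?thesis
      using less_cSup_iff [OF _ bdd] unfolding S_def by blast
  qed
  then obtain xs where "\<And>k. norm (xs k) \<le> 1" "\<And>k. M - 1 / real (Suc k) < Re (psi (xs k))"
    by metis
  then obtain u where "norm u = 1" "psi u = complex_of_real M"
    by (rule limit_of_Re_maximizing [OF add scale bounded Re_le M])
  then show ?thesis
    using that M Re_le by blast
qed

lemma cinner_eq_0_if_norm_le_norm_add:
  fixes u v :: "'a::complex_inner"
  assumes "\<And>t. norm u \<le> norm (u + t *\<^sub>C v)"
  shows "cinner u v = 0"
proof -
  define c where "c = cmod (cinner u v)"
  define s where "s = 1 / ((norm v)\<^sup>2 + 1)"
  define t where "t = - complex_of_real s * cinner u v"
  have "0 < (norm v)\<^sup>2 + 1"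
    by (simp add: add_nonneg_pos)
  then have s: "0 < s" "s * (norm v)\<^sup>2 < 1"
    by (simp_all add: s_def divide_less_eq)
  have "cnj (cinner u v) * cinner u v = complex_of_real (c\<^sup>2)"
    unfolding c_def complex_norm_square by (simp add: mult.commute)
  then have "cnj t * cinner u v = - complex_of_real (s * c\<^sup>2)"
    by (simp add: t_def mult.assoc)
  moreover have "cmod t = s * c"
    using s by (simp add: t_def c_def norm_mult)
  moreover have "(norm u)\<^sup>2 \<le> (norm (u + t *\<^sub>C v))\<^sup>2"
    using assms by (simp add: power_mono)
  ultimately have "0 \<le> (s * c * norm v)\<^sup>2 - 2 * (s * c\<^sup>2)"
    by (simp add: norm_add_square norm_scaleC cinner_scaleC_right)
  then have "0 \<le> s * c\<^sup>2 * (s * (norm v)\<^sup>2 - 2)"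
    by (simp add: power2_eq_square algebra_simps)
  then have "s * c\<^sup>2 \<le> 0"
    using s(2) by (smt (verit) mult_pos_neg)
  then have "c = 0"
    using s(1) by (simp add: mult_le_0_iff)
  then show ?thesis
    by (simp add: c_def)
qed

theorem riesz_representation:
  fixes psi :: "'a::{complex_inner,complete_space} \<Rightarrow> complex"
  assumes add: "\<And>x y. psi (x + y) = psi x + psi y"
    and scale: "\<And>c x. psi (c *\<^sub>C x) = c * psi x"
    and bounded: "\<And>x. cmod (psi x) \<le> K * norm x"
  shows "\<exists>h. \<forall>x. psi x = cinner x h"
proof (cases "\<forall>x. psi x = 0")
  case True
  then show ?thesis
    by (intro exI [of _ 0]) simp
next
  case False
  then obtain u M where M: "0 < M" and u: "norm u = 1" "psi u = complex_of_real M"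
    and Re_le: "\<And>w. Re (psi w) \<le> M * norm w"
    using clinear_functional_attains_norm [OF add scale bounded] by blast
  have kernel_orthogonal: "cinner u v = 0" if "psi v = 0" for v
  proof (rule cinner_eq_0_if_norm_le_norm_add)
    fix t
    have "M \<le> M * norm (u + t *\<^sub>C v)"
      using Re_le [of "u + t *\<^sub>C v"] by (simp add: add scale that u)
    then show "norm u \<le> norm (u + t *\<^sub>C v)"
      using M u by simp
  qed
  show ?thesis
  proof (intro exI allI)
    fix x
    have "psi (psi x *\<^sub>C u - complex_of_real M *\<^sub>C x) = 0"
      using add [of "psi x *\<^sub>C u - complex_of_real M *\<^sub>C x" "complex_of_real M *\<^sub>C x"]
      by (simp add: scale u)
    then have "cinner u (psi x *\<^sub>C u - complex_of_real M *\<^sub>C x) = 0"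
      by (rule kernel_orthogonal)
    then have "cnj (psi x) = complex_of_real M * cinner u x"
      by (simp add: cinner_diff_right cinner_scaleC_right cinner_self u)
    then show "psi x = cinner x (complex_of_real M *\<^sub>C u)"
      by (metis cinner_commute cinner_scaleC_right complex_cnj_cnj complex_cnj_complex_of_real
          complex_cnj_mult)
  qed
qed

lemma continuous_eq_on_dense:
  fixes F G :: "'a::topological_space \<Rightarrow> 'b::t2_space"
  assumes "closure D = UNIV" "continuous_on UNIV F" "continuous_on UNIV G"
    and "\<And>x. x \<in> D \<Longrightarrow> F x = G x"
  shows "F x = G x"
proof -
  have "closure D \<subseteq> {x. F x = G x}"
    using assms(4) by (intro closure_minimal closed_Collect_eq [OF assms(2,3)]) auto
  then show ?thesis
    using assms(1) by blast
qed

lemma continuous_le_on_dense: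
  fixes F G :: "'a::topological_space \<Rightarrow> 'b::linorder_topology"
  assumes "closure D = UNIV" "continuous_on UNIV F" "continuous_on UNIV G"
    and "\<And>x. x \<in> D \<Longrightarrow> F x \<le> G x"
  shows "F x \<le> G x"
proof -
  have "closure D \<subseteq> {x. F x \<le> G x}"
    using assms(4) by (intro closure_minimal closed_Collect_le [OF assms(2,3)]) auto
  then show ?thesis
    using assms(1) by blast
qed

lemma conj_linear_on_lipschitz:
  assumes sub: "csubspace D" and lin: "conj_linear_on D phi"
    and bounded: "\<And>f. f \<in> D \<Longrightarrow> cmod (phi f) \<le> K * norm f" and K: "0 \<le> K"
  shows "K-lipschitz_on D phi"
proof (rule lipschitz_onI [OF _ K])
  fix x y
  assume "x \<in> D" "y \<in> D"
  moreover have "phi (x - y + y) = phi (x - y) + phi y" if "x - y \<in> D" "y \<in> D"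
    using lin that unfolding conj_linear_on_def by blast
  ultimately have "phi x - phi y = phi (x - y)"
    using csubspace_diff [OF sub] by simp
  then show "dist (phi x) (phi y) \<le> K * dist x y"
    using bounded csubspace_diff [OF sub \<open>x \<in> D\<close> \<open>y \<in> D\<close>] by (simp add: dist_norm)
qed

lemma conj_linear_on_dense_extends:
  fixes D :: "'a::complex_inner set" and phi :: "'a \<Rightarrow> complex"
  assumes sub: "csubspace D" and dense: "closure D = UNIV"
    and lin: "conj_linear_on D phi"
    and bounded: "\<And>f. f \<in> D \<Longrightarrow> cmod (phi f) \<le> K * norm f" and K: "0 \<le> K"
  obtains g where "\<And>x. x \<in> D \<Longrightarrow> g x = phi x"
    "\<And>x y. g (x + y) = g x + g y" "\<And>c x. g (c *\<^sub>C x) = cnj c * g x"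
    "\<And>x. cmod (g x) \<le> K * norm x"
proof -
  have add_D: "x \<in> D \<Longrightarrow> y \<in> D \<Longrightarrow> x + y \<in> D" and scale_D: "x \<in> D \<Longrightarrow> c *\<^sub>C x \<in> D" for x y c
    using sub by (simp_all add: csubspace_def)
  have add_phi: "x \<in> D \<Longrightarrow> y \<in> D \<Longrightarrow> phi (x + y) = phi x + phi y"
    and scale_phi: "x \<in> D \<Longrightarrow> phi (c *\<^sub>C x) = cnj c * phi x" for x y c
    using lin by (simp_all add: conj_linear_on_def)
  have "K-lipschitz_on D phi"
    by (rule conj_linear_on_lipschitz [OF sub lin bounded K])
  then obtain g where "uniformly_continuous_on (closure D) g" and g_D: "\<And>x. x \<in> D \<Longrightarrow> phi x = g x"
    by (metis lipschitz_on_uniformly_continuous uniformly_continuous_on_extension_on_closure)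
  then have g: "continuous_on UNIV g"
    using dense uniformly_continuous_imp_continuous by metis
  have g_comp: "continuous_on UNIV (\<lambda>x. g (f x))" if "continuous_on UNIV f" for f :: "'a \<Rightarrow> 'a"
    using continuous_on_compose2 [OF g that] by simp
  have add_left: "g (x + y) = g x + g y" if "y \<in> D" for x y
  proof (rule continuous_eq_on_dense [OF dense, where F = "\<lambda>x. g (x + y)" and G = "\<lambda>x. g x + g y"])
    show "continuous_on UNIV (\<lambda>x. g (x + y))"
      by (intro g_comp continuous_intros)
    show "continuous_on UNIV (\<lambda>x. g x + g y)"
      by (intro continuous_intros g)
    show "g (x + y) = g x + g y" if "x \<in> D" for x
      using \<open>x \<in> D\<close> \<open>y \<in> D\<close> by (simp add: add_D add_phi flip: g_D)
  qed
  have add: "g (x + y) = g x + g y" for x y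
  proof (rule continuous_eq_on_dense [OF dense, where F = "\<lambda>y. g (x + y)" and G = "\<lambda>y. g x + g y"])
    show "continuous_on UNIV (\<lambda>y. g (x + y))"
      by (intro g_comp continuous_intros)
    show "continuous_on UNIV (\<lambda>y. g x + g y)"
      by (intro continuous_intros g)
  qed (rule add_left)
  have scale: "g (c *\<^sub>C x) = cnj c * g x" for c x
  proof (rule continuous_eq_on_dense [OF dense, where F = "\<lambda>x. g (c *\<^sub>C x)" and G = "\<lambda>x. cnj c * g x"])
    show "continuous_on UNIV (\<lambda>x. g (c *\<^sub>C x))"
      by (intro g_comp linear_continuous_on bounded_linear_scaleC_right)
    show "continuous_on UNIV (\<lambda>x. cnj c * g x)"
      by (intro continuous_intros g)
    show "g (c *\<^sub>C x) = cnj c * g x" if "x \<in> D" for x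
      using that by (simp add: scale_D scale_phi flip: g_D)
  qed
  have bound: "cmod (g x) \<le> K * norm x" for x
  proof (rule continuous_le_on_dense [OF dense, where F = "\<lambda>x. cmod (g x)" and G = "\<lambda>x. K * norm x"])
    show "continuous_on UNIV (\<lambda>x. cmod (g x))"
      by (intro continuous_intros g)
    show "continuous_on UNIV (\<lambda>x::'a. K * norm x)"
      by (intro continuous_intros)
    show "cmod (g x) \<le> K * norm x" if "x \<in> D" for x
      using that by (simp add: bounded flip: g_D)
  qed
  show ?thesis
    by (rule that [OF _ add scale bound]) (simp add: g_D)
qed

lemma conj_linear_on_dense_represented:
  fixes D :: "'a::{complex_inner,complete_space} set" and phi :: "'a \<Rightarrow> complex"
  assumes "csubspace D" "closure D = UNIV" "conj_linear_on D phi"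
    and "\<And>f. f \<in> D \<Longrightarrow> cmod (phi f) \<le> K * norm f" "0 \<le> K"
  shows "\<exists>h. \<forall>f\<in>D. phi f = cinner h f"
proof -
  obtain g where g_D: "\<And>x. x \<in> D \<Longrightarrow> g x = phi x"
    and add: "\<And>x y. g (x + y) = g x + g y" and scale: "\<And>c x. g (c *\<^sub>C x) = cnj c * g x"
    and bounded: "\<And>x. cmod (g x) \<le> K * norm x"
    using conj_linear_on_dense_extends [OF assms] by blast
  have "\<exists>h. \<forall>x. cnj (g x) = cinner x h"
  proof (rule riesz_representation)
    show "cnj (g (x + y)) = cnj (g x) + cnj (g y)" for x y
      by (simp add: add)
    show "cnj (g (c *\<^sub>C x)) = c * cnj (g x)" for c x
      by (simp add: scale)
    show "cmod (cnj (g x)) \<le> K * norm x" for x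
      using bounded [of x] by simp
  qed
  then obtain h where h: "\<And>x. cnj (g x) = cinner x h"
    by blast
  have "g x = cinner h x" for x
    by (metis h cinner_commute complex_cnj_cnj)
  then show ?thesis
    using g_D by metis
qed

definition coeff_square_sum :: "(nat \<Rightarrow> 'a::complex_inner) \<Rightarrow> 'a \<Rightarrow> real" where
  "coeff_square_sum h f = (\<Sum>n. (cmod (cinner f (h n)))\<^sup>2)"

lemma bessel_sequence_if_dense:
  fixes h :: "nat \<Rightarrow> 'a::complex_inner"
  assumes dense: "closure D = UNIV"
    and partial_le: "\<And>f N. f \<in> D \<Longrightarrow> (\<Sum>n<N. (cmod (cinner f (h n)))\<^sup>2) \<le> B * (norm f)\<^sup>2"
  shows "bessel_sequence h B"
  unfolding bessel_sequence_def
proof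
  fix f
  have le: "(\<Sum>n<N. (cmod (cinner f (h n)))\<^sup>2) \<le> B * (norm f)\<^sup>2" for N
  proof (rule continuous_le_on_dense [OF dense, where F = "\<lambda>f. \<Sum>n<N. (cmod (cinner f (h n)))\<^sup>2"
        and G = "\<lambda>f. B * (norm f)\<^sup>2"])
    show "continuous_on UNIV (\<lambda>f. \<Sum>n<N. (cmod (cinner f (h n)))\<^sup>2)"
      by (intro continuous_intros linear_continuous_on bounded_linear_cinner_left)
    show "continuous_on UNIV (\<lambda>f::'a. B * (norm f)\<^sup>2)"
      by (intro continuous_intros)
  qed (rule partial_le)
  have "summable (\<lambda>n. (cmod (cinner f (h n)))\<^sup>2)"
    by (rule summableI_nonneg_bounded [OF _ le]) simp
  then show "summable (\<lambda>n. (cmod (cinner f (h n)))\<^sup>2) \<and> (\<Sum>n. (cmod (cinner f (h n)))\<^sup>2) \<le> B * (norm f)\<^sup>2"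
    using suminf_le_const le by blast
qed

lemma coeff_square_sum_nonneg:
  assumes "bessel_sequence h B"
  shows "0 \<le> coeff_square_sum h f"
  using assms unfolding bessel_sequence_def coeff_square_sum_def by (simp add: suminf_nonneg)

lemma coeff_square_sum_le:
  assumes "bessel_sequence h B"
  shows "coeff_square_sum h f \<le> B * (norm f)\<^sup>2"
  using assms unfolding bessel_sequence_def coeff_square_sum_def by simp

lemma sqrt_coeff_square_sum_triangle:
  fixes h :: "nat \<Rightarrow> 'a::complex_inner"
  assumes "bessel_sequence h B"
  shows "sqrt (coeff_square_sum h (f + g)) \<le> sqrt (coeff_square_sum h f) + sqrt (coeff_square_sum h g)"
proof -
  let ?c = "\<lambda>f n. cmod (cinner f (h n))"
  have summable: "summable (\<lambda>n. (?c f n)\<^sup>2)" for f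
    using assms by (simp add: bessel_sequence_def)
  have partial: "L2_set (?c f) {..<N} \<le> sqrt (coeff_square_sum h f)" for f N
    unfolding L2_set_def coeff_square_sum_def
    by (intro real_sqrt_le_mono sum_le_suminf [OF summable]) auto
  have "(\<Sum>n<N. (?c (f + g) n)\<^sup>2) \<le> (sqrt (coeff_square_sum h f) + sqrt (coeff_square_sum h g))\<^sup>2" for N
  proof -
    have "L2_set (?c (f + g)) {..<N} \<le> L2_set (\<lambda>n. ?c f n + ?c g n) {..<N}"
      by (rule L2_set_mono) (simp_all add: cinner_add_left norm_triangle_ineq)
    also have "\<dots> \<le> L2_set (?c f) {..<N} + L2_set (?c g) {..<N}"
      by (rule L2_set_triangle_ineq)
    also have "\<dots> \<le> sqrt (coeff_square_sum h f) + sqrt (coeff_square_sum h g)"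
      by (intro add_mono partial)
    finally show ?thesis
      unfolding L2_set_def by (rule sqrt_le_D)
  qed
  then have "coeff_square_sum h (f + g) \<le> (sqrt (coeff_square_sum h f) + sqrt (coeff_square_sum h g))\<^sup>2"
    unfolding coeff_square_sum_def by (rule suminf_le_const [OF summable])
  then show ?thesis
    using coeff_square_sum_nonneg [OF assms] by (simp add: real_le_lsqrt)
qed

lemma continuous_on_coeff_square_sum:
  fixes h :: "nat \<Rightarrow> 'a::complex_inner"
  assumes bessel: "bessel_sequence h B" and B: "0 \<le> B"
  shows "continuous_on UNIV (coeff_square_sum h)"
proof -
  have "(sqrt B)-lipschitz_on UNIV (\<lambda>f. sqrt (coeff_square_sum h f))"
  proof (rule lipschitz_onI)
    fix f g :: 'a
    have "sqrt (coeff_square_sum h f) \<le> sqrt (coeff_square_sum h g) + sqrt (coeff_square_sum h (f - g))"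
      "sqrt (coeff_square_sum h g) \<le> sqrt (coeff_square_sum h f) + sqrt (coeff_square_sum h (g - f))"
      using sqrt_coeff_square_sum_triangle [OF bessel, of g "f - g"]
        sqrt_coeff_square_sum_triangle [OF bessel, of f "g - f"] by simp_all
    moreover have "sqrt (coeff_square_sum h x) \<le> sqrt B * norm x" for x
      using real_sqrt_le_mono [OF coeff_square_sum_le [OF bessel, of x]] by (simp add: real_sqrt_mult)
    from this [of "f - g"] this [of "g - f"]
    have "sqrt (coeff_square_sum h (f - g)) \<le> sqrt B * dist f g"
      "sqrt (coeff_square_sum h (g - f)) \<le> sqrt B * dist f g"
      by (simp_all add: dist_norm norm_minus_commute)
    ultimately show "dist (sqrt (coeff_square_sum h f)) (sqrt (coeff_square_sum h g)) \<le> sqrt B * dist f g"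
      by (simp add: dist_real_def abs_le_iff)
  qed (simp add: B)
  then have "continuous_on UNIV (\<lambda>f. (sqrt (coeff_square_sum h f))\<^sup>2)"
    by (intro continuous_intros lipschitz_on_continuous_on)
  then show ?thesis
    using coeff_square_sum_nonneg [OF bessel] by simp
qed

lemma frame_sequence_if_dense:
  fixes h :: "nat \<Rightarrow> 'a::complex_inner"
  assumes dense: "closure D = UNIV" and bessel: "bessel_sequence h B" and B: "0 \<le> B"
    and lower: "\<And>f. f \<in> D \<Longrightarrow> A * (norm f)\<^sup>2 \<le> coeff_square_sum h f"
  shows "frame_sequence h A B"
proof -
  have "A * (norm f)\<^sup>2 \<le> coeff_square_sum h f" for f
  proof (rule continuous_le_on_dense [OF dense, where F = "\<lambda>f. A * (norm f)\<^sup>2"])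
    show "continuous_on UNIV (\<lambda>f::'a. A * (norm f)\<^sup>2)"
      by (intro continuous_intros)
  qed (use continuous_on_coeff_square_sum [OF bessel B] lower in auto)
  then show ?thesis
    using bessel by (simp add: frame_sequence_def coeff_square_sum_def)
qed

lemma bessel_distribution_map_count_space:
  fixes \<omega> :: "nat \<Rightarrow> 'h::complex_inner \<Rightarrow> complex"
  assumes "bessel_distribution_map P D (count_space UNIV) \<omega> B" and f: "f \<in> D"
  shows "summable (\<lambda>n. (cmod (\<omega> n f))\<^sup>2)" and "(\<Sum>n. (cmod (\<omega> n f))\<^sup>2) \<le> B * (norm f)\<^sup>2"
proof -
  have B: "0 < B" and le: "(\<Sum>n. ennreal ((cmod (\<omega> n f))\<^sup>2)) \<le> ennreal (B * (norm f)\<^sup>2)"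
    using assms by (simp_all add: bessel_distribution_map_def nn_integral_count_space_nat)
  then show summable: "summable (\<lambda>n. (cmod (\<omega> n f))\<^sup>2)"
    by (intro summable_suminf_not_top) (auto simp: top_unique)
  show "(\<Sum>n. (cmod (\<omega> n f))\<^sup>2) \<le> B * (norm f)\<^sup>2"
    using le B by (simp add: suminf_ennreal2 [OF _ summable] ennreal_le_iff)
qed

lemma bessel_distribution_map_count_space_bounded:
  fixes \<omega> :: "nat \<Rightarrow> 'h::complex_inner \<Rightarrow> complex"
  assumes "bessel_distribution_map P D (count_space UNIV) \<omega> B" and "f \<in> D"
  shows "cmod (\<omega> n f) \<le> sqrt B * norm f"
proof -
  have "(cmod (\<omega> n f))\<^sup>2 \<le> (\<Sum>n. (cmod (\<omega> n f))\<^sup>2)"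
    using sum_le_suminf [OF bessel_distribution_map_count_space(1) [OF assms], of "{n}"] by simp
  also have "\<dots> \<le> B * (norm f)\<^sup>2"
    by (rule bessel_distribution_map_count_space(2) [OF assms])
  finally have "cmod (\<omega> n f) \<le> sqrt (B * (norm f)\<^sup>2)"
    by (rule real_le_rsqrt)
  then show ?thesis
    by (simp add: real_sqrt_mult)
qed

lemma distribution_frame_count_space_lower:
  fixes \<omega> :: "nat \<Rightarrow> 'h::complex_inner \<Rightarrow> complex"
  assumes "distribution_frame P D (count_space UNIV) \<omega> A B" and f: "f \<in> D"
  shows "A * (norm f)\<^sup>2 \<le> (\<Sum>n. (cmod (\<omega> n f))\<^sup>2)"
proof -
  have bessel: "bessel_distribution_map P D (count_space UNIV) \<omega> B"
    and le: "ennreal (A * (norm f)\<^sup>2) \<le> (\<Sum>n. ennreal ((cmod (\<omega> n f))\<^sup>2))"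
    using assms by (simp_all add: distribution_frame_def nn_integral_count_space_nat)
  have summable: "summable (\<lambda>n. (cmod (\<omega> n f))\<^sup>2)"
    by (rule bessel_distribution_map_count_space(1) [OF bessel f])
  then have "ennreal (A * (norm f)\<^sup>2) \<le> ennreal (\<Sum>n. (cmod (\<omega> n f))\<^sup>2)"
    using le by (simp add: suminf_ennreal2)
  then show ?thesis
    using summable by (simp add: ennreal_le_iff suminf_nonneg)
qed

lemma bessel_distribution_map_count_space_represented:
  fixes D :: "'h::{complex_inner, complete_space} set" and \<omega> :: "nat \<Rightarrow> 'h \<Rightarrow> complex"
  assumes rhs: "rigged_hilbert_space D P"
    and bessel: "bessel_distribution_map P D (count_space UNIV) \<omega> B"
  obtains h where "\<And>n f. f \<in> D \<Longrightarrow> \<omega> n f = cinner (h n) f" "bessel_sequence h B"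
proof -
  have sub: "csubspace D" and dense: "closure D = UNIV"
    using rhs by (simp_all add: rigged_hilbert_space_def)
  have "\<exists>h. \<forall>f\<in>D. \<omega> n f = cinner h f" for n
  proof (rule conj_linear_on_dense_represented [OF sub dense])
    show "conj_linear_on D (\<omega> n)"
      using bessel by (simp add: bessel_distribution_map_def dual_space_def)
    show "0 \<le> sqrt B"
      using bessel by (simp add: bessel_distribution_map_def)
  qed (rule bessel_distribution_map_count_space_bounded [OF bessel])
  then obtain h where h: "\<And>n f. f \<in> D \<Longrightarrow> \<omega> n f = cinner (h n) f"
    by metis
  have "bessel_sequence h B"
  proof (rule bessel_sequence_if_dense [OF dense])
    fix f N
    assume f: "f \<in> D"
    have "(\<Sum>n<N. (cmod (cinner f (h n)))\<^sup>2) = (\<Sum>n<N. (cmod (\<omega> n f))\<^sup>2)"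
      by (simp add: h [OF f] cmod_cinner_commute)
    also have "\<dots> \<le> (\<Sum>n. (cmod (\<omega> n f))\<^sup>2)"
      by (intro sum_le_suminf bessel_distribution_map_count_space(1) [OF bessel f]) auto
    also have "\<dots> \<le> B * (norm f)\<^sup>2"
      by (rule bessel_distribution_map_count_space(2) [OF bessel f])
    finally show "(\<Sum>n<N. (cmod (cinner f (h n)))\<^sup>2) \<le> B * (norm f)\<^sup>2" .
  qed
  with h show ?thesis
    by (rule that)
qed

theorem proposition2p7:
  fixes D :: "'h::{complex_inner, complete_space} set"
    and P :: "('h \<Rightarrow> real) set"
    and \<omega> :: "nat \<Rightarrow> 'h \<Rightarrow> complex"
    and A B :: real
  assumes rhs: "rigged_hilbert_space D P"
    and refl: "reflexive_lcs P D"
  shows "(bessel_distribution_map P D (count_space UNIV) \<omega> B \<longrightarrow>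
           (\<forall>n. \<exists>C. \<forall>f\<in>D. cmod (\<omega> n f) \<le> C * norm f)
         \<and> (\<exists>h :: nat \<Rightarrow> 'h. (\<forall>n. \<forall>f\<in>D. \<omega> n f = cinner (h n) f) \<and> bessel_sequence h B))
       \<and> (distribution_frame P D (count_space UNIV) \<omega> A B \<longrightarrow>
           (\<forall>n. \<exists>C. \<forall>f\<in>D. cmod (\<omega> n f) \<le> C * norm f)
         \<and> (\<exists>h :: nat \<Rightarrow> 'h. (\<forall>n. \<forall>f\<in>D. \<omega> n f = cinner (h n) f) \<and> frame_sequence h A B))"
proof (intro conjI impI)
  assume bessel: "bessel_distribution_map P D (count_space UNIV) \<omega> B"
  show "\<forall>n. \<exists>C. \<forall>f\<in>D. cmod (\<omega> n f) \<le> C * norm f"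
    using bessel_distribution_map_count_space_bounded [OF bessel] by blast
  show "\<exists>h. (\<forall>n. \<forall>f\<in>D. \<omega> n f = cinner (h n) f) \<and> bessel_sequence h B"
    using bessel_distribution_map_count_space_represented [OF rhs bessel] by metis
next
  assume frame: "distribution_frame P D (count_space UNIV) \<omega> A B"
  then have bessel: "bessel_distribution_map P D (count_space UNIV) \<omega> B"
    by (simp add: distribution_frame_def)
  show "\<forall>n. \<exists>C. \<forall>f\<in>D. cmod (\<omega> n f) \<le> C * norm f"
    using bessel_distribution_map_count_space_bounded [OF bessel] by blast
  obtain h where h: "\<And>n f. f \<in> D \<Longrightarrow> \<omega> n f = cinner (h n) f" and "bessel_sequence h B"
    using bessel_distribution_map_count_space_represented [OF rhs bessel] by blast
  have "frame_sequence h A B"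
  proof (rule frame_sequence_if_dense)
    show "closure D = UNIV"
      using rhs by (simp add: rigged_hilbert_space_def)
    show "0 \<le> B"
      using bessel by (simp add: bessel_distribution_map_def)
    show "A * (norm f)\<^sup>2 \<le> coeff_square_sum h f" if "f \<in> D" for f
      using distribution_frame_count_space_lower [OF frame that]
      by (simp add: coeff_square_sum_def h [OF that] cmod_cinner_commute)
  qed fact
  with h show "\<exists>h. (\<forall>n. \<forall>f\<in>D. \<omega> n f = cinner (h n) f) \<and> frame_sequence h A B"
    by blast
qed

end
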